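(* Let $g\in\mathcal{G}$ be $\mathbb{S}$-nearly periodic. Then either $g$ is not 1-pass tractable, or for every $\eta>0$ the function $L_\eta(g)$ is not 1-pass tractable, where $L_\eta(g)(x)=g(x)\log^\eta(1+x)$.
   Context: Streams: a stream of length $m$ with domain $[n]$ is a list $D=\langle (i_1,\delta_1),\dots,(i_m,\delta_m)\rangle$ with $i_j\in[n]$, $\delta_j\in\mathbb{Z}$; its frequency vector $V(D)=v\in\mathbb{Z}^n$ has $v_i=\sum_{j:i_j=i}\delta_j$. (Turnstile model) there is $M\in\mathbb{N}$ such that the frequency vector of $D$ and of every prefix of $D$ lies in $\{-M,\dots,M\}^n$; throughout $M$ is polynomial in $n$. $\mathcal{D}(n,m)$ is the set of such streams with domain $[n]$ and length at most $m$. A $p$-pass algorithm reads the stream $p$ times in order and may use randomness. For $g:\mathbb{Z}_{\ge0}\to\mathbb{R}$ and $v\in\mathbb{Z}^n$ let $g(v)=\sum_{i=1}^n g(|v_i|)$. The problem $(g,\epsilon)$-SUM is to output $\hat G$ with $P\big((1-\epsilon)g(V(D))\le \hat G\le (1+\epsilon)g(V(D))\big)\ge 2/3$. A function $f:\mathbb{R}_{\ge0}\to\mathbb{R}_{\ge0}$ is sub-polynomial if for every $\alpha>0$, $\lim_{x\to\infty}x^\alpha f(x)=\infty$ and $\lim_{x\to\infty}x^{-\alpha}f(x)=0$. $g$ is $p$-pass tractable if for every sub-polynomial $h$ and every $\epsilon\ge 1/h(nM)$ there exist a sub-polynomial $h^*$ and a $p$-pass algorithm (with oracle access to $g$) that solves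 $(g,\epsilon)$-SUM for all streams in $\mathcal{D}(n,m)$ and all $n,M\ge1$ using at most $h^*(nM)$ bits of space in the worst case. $\mathcal{G}=\{g:\mathbb{Z}_{\ge0}\to\mathbb{R}: g(0)=0,\ g(1)=1,\ g(x)>0\ \forall x>0\}$. For a set $\mathcal{S}$ of functions, $g$ is $\mathcal{S}$-nearly periodic if (1) there is $\alpha>0$ such that for every $N>0$ there exist $x,y\in\mathbb{N}$, $x<y$, $y\ge N$ with $g(y)\le g(x)/y^\alpha$ (such $y$ is called an $\alpha$-period of $g$); and (2) for every $\alpha>0$ and every $h\in\mathcal{S}$ there is $N_1>0$ such that for all $\alpha$-periods $y\ge N_1$ and all $x<y$ with $g(y)y^\alpha\le g(x)$, $|g(x+y)-g(x)|\le \min\{g(x),g(x+y)\}h(y)$. $\mathbb{S}$ denotes the set of non-increasing sub-polynomial functions on $\mathbb{Z}_{\ge0}$. *)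

theory Defs
  imports "HOL-Probability.Probability"
begin

(* Streams: lists of updates (i, delta); domain [n] is rendered as {0..<n}. *)
type_synonym stream = "(nat \<times> int) list"

definition freq :: "stream \<Rightarrow> nat \<Rightarrow> int" where
  "freq D i = sum_list (map snd (filter (\<lambda>u. fst u = i) D))"

definition streams :: "nat \<Rightarrow> nat \<Rightarrow> nat \<Rightarrow> stream set" where
  "streams n M m = {D. length D \<le> m \<and> (\<forall>u\<in>set D. fst u < n) \<and>
      (\<forall>k\<le>length D. \<forall>i<n. \<bar>freq (take k D) i\<bar> \<le> int M)}"

definition gsum :: "(nat \<Rightarrow> real) \<Rightarrow> nat \<Rightarrow> stream \<Rightarrow> real" where
  "gsum g n D = (\<Sum>i<n. g (nat \<bar>freq D i\<bar>))"

record alg1 =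
  seed :: "nat pmf"
  init :: "nat \<Rightarrow> bool list"
  step :: "nat \<Rightarrow> bool list \<Rightarrow> nat \<times> int \<Rightarrow> bool list"
  out  :: "nat \<Rightarrow> bool list \<Rightarrow> real"

definition run :: "alg1 \<Rightarrow> nat \<Rightarrow> stream \<Rightarrow> bool list" where
  "run A r D = fold (\<lambda>u st. step A r st u) D (init A r)"

definition space_le :: "alg1 \<Rightarrow> stream set \<Rightarrow> real \<Rightarrow> bool" where
  "space_le A S s = (\<forall>D\<in>S. \<forall>r\<in>set_pmf (seed A). \<forall>k\<le>length D.
      real (length (run A r (take k D))) \<le> s)"

definition solves :: "alg1 \<Rightarrow> (nat \<Rightarrow> real) \<Rightarrow> real \<Rightarrow> nat \<Rightarrow> stream set \<Rightarrow> bool" where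
  "solves A g eps n S = (\<forall>D\<in>S.
      measure_pmf.prob (seed A)
        {r. (1 - eps) * gsum g n D \<le> out A r (run A r D)
          \<and> out A r (run A r D) \<le> (1 + eps) * gsum g n D} \<ge> 2/3)"

definition sub_polynomial :: "(real \<Rightarrow> real) \<Rightarrow> bool" where
  "sub_polynomial f = ((\<forall>x\<ge>0. f x \<ge> 0) \<and>
     (\<forall>a>0. filterlim (\<lambda>x. x powr a * f x) at_top at_top) \<and>
     (\<forall>a>0. ((\<lambda>x. x powr (-a) * f x) \<longlongrightarrow> 0) at_top))"

definition one_pass_tractable :: "(nat \<Rightarrow> real) \<Rightarrow> bool" where
  "one_pass_tractable g = (\<forall>h. sub_polynomial h \<longrightarrow> (\<exists>hs. sub_polynomial hs \<and>
     (\<forall>n M m eps. n \<ge> 1 \<longrightarrow> M \<ge> 1 \<longrightarrow> eps > 0 \<longrightarrow> eps \<ge> 1 / h (real n * real M) \<longrightarrow>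
        (\<exists>A. solves A g eps n (streams n M m) \<and>
             space_le A (streams n M m) (hs (real n * real M))))))"

definition class_G :: "(nat \<Rightarrow> real) set" where
  "class_G = {g. g 0 = 0 \<and> g 1 = 1 \<and> (\<forall>x>0. g x > 0)}"

definition class_S :: "(nat \<Rightarrow> real) set" where
  "class_S = {f. antimono f \<and> (\<forall>x. f x \<ge> 0) \<and>
     (\<forall>a>0. filterlim (\<lambda>x. real x powr a * f x) at_top sequentially) \<and>
     (\<forall>a>0. ((\<lambda>x. real x powr (-a) * f x) \<longlongrightarrow> 0) sequentially)}"

definition is_period :: "(nat \<Rightarrow> real) \<Rightarrow> real \<Rightarrow> nat \<Rightarrow> bool" where
  "is_period g a y = (\<exists>x<y. g y \<le> g x / real y powr a)"

definition nearly_periodic :: "(nat \<Rightarrow> real) set \<Rightarrow> (nat \<Rightarrow> real) \<Rightarrow> bool" where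
  "nearly_periodic SS g =
    ((\<exists>a>0. \<forall>N>0. \<exists>x y::nat. x < y \<and> real y \<ge> N \<and> g y \<le> g x / real y powr a) \<and>
     (\<forall>a>0. \<forall>h\<in>SS. \<exists>N1>0. \<forall>y x. is_period g a y \<and> real y \<ge> N1 \<and> x < y \<and>
         g y * real y powr a \<le> g x \<longrightarrow>
         \<bar>g (x + y) - g x\<bar> \<le> min (g x) (g (x + y)) * h y))"

(* L_eta(g)(x) = g(x) * log^eta (1+x)  (log base 2, so L_eta(g)(1) = 1) *)
definition L_eta :: "real \<Rightarrow> (nat \<Rightarrow> real) \<Rightarrow> nat \<Rightarrow> real" where
  "L_eta eta g x = g x * (log 2 (1 + real x)) powr eta"

end

theory Submission
  imports Defs "HOL-Real_Asymp.Real_Asymp"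
begin

(* Near-periodicity gives arbitrarily large y and x < y with g(y) <= g(x) / y^a and
   g(x + y) = g(x) (1 + O(1/log y)).  For F = L_eta(g) the factor log^eta(1 + x + y) >=
   (1 + log(1 + x))^eta then makes F(x + y) exceed F(x) + N F(y) by a factor 1 + Omega(1/log y)
   when N is about y^(a/2), and accuracy eps = Theta(1/log(nM)) detects this gap.  Hence a
   1-pass algorithm for (F, eps)-SUM on N coordinates solves INDEX: the stream first raises the
   coordinates of a set B to y, its last update adds x to coordinate i, and the estimate tells
   whether i is in B.  Counting the sets B on which a fixed guess agrees in many coordinates
   shows that this needs Omega(N) bits of memory, which is polynomial in nM.  So the second
   alternative of the theorem always holds. *)

section \<open>Agreement counting\<close>

definition agreements :: "'a set \<Rightarrow> 'a set \<Rightarrow> 'a set \<Rightarrow> nat" where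
  "agreements U C B = card {i\<in>U. (i \<in> C) = (i \<in> B)}"

lemma agreements_le_card: "finite U \<Longrightarrow> agreements U C B \<le> card U"
  unfolding agreements_def by (intro card_mono) auto

lemma agreements_insert_notin:
  assumes "finite U" "a \<notin> U" "B \<subseteq> U"
  shows "agreements (insert a U) C B = agreements U C B + (if a \<in> C then 0 else 1)"
proof -
  have "{i\<in>insert a U. (i \<in> C) = (i \<in> B)} =
      (if a \<in> C then {i\<in>U. (i \<in> C) = (i \<in> B)} else insert a {i\<in>U. (i \<in> C) = (i \<in> B)})"
    using assms by auto
  then show ?thesis using assms by (simp add: agreements_def)
qed

lemma agreements_insert_in:
  assumes "finite U" "a \<notin> U" "B \<subseteq> U"
  shows "agreements (insert a U) C (insert a B) = agreements U C B + (if a \<in> C then 1 else 0)"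
proof -
  have "{i\<in>insert a U. (i \<in> C) = (i \<in> insert a B)} =
      (if a \<in> C then insert a {i\<in>U. (i \<in> C) = (i \<in> B)} else {i\<in>U. (i \<in> C) = (i \<in> B)})"
    using assms by auto
  then show ?thesis using assms by (simp add: agreements_def)
qed

lemma sum_two_power_agreements:
  assumes "finite U"
  shows "(\<Sum>B\<in>Pow U. (2::real) ^ agreements U C B) = 3 ^ card U"
  using assms
proof (induction U rule: finite_induct)
  case empty
  then show ?case by (simp add: agreements_def)
next
  case (insert a U)
  let ?w = "\<lambda>B. (2::real) ^ agreements U C B"
  have "Pow U \<inter> insert a ` Pow U = {}" and "inj_on (insert a) (Pow U)"
    using insert by (auto simp: inj_on_def)
  then have "(\<Sum>B\<in>Pow (insert a U). (2::real) ^ agreements (insert a U) C B)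
      = (\<Sum>B\<in>Pow U. (2::real) ^ agreements (insert a U) C B)
        + (\<Sum>B\<in>Pow U. (2::real) ^ agreements (insert a U) C (insert a B))"
    using insert by (simp add: Pow_insert sum.union_disjoint sum.reindex)
  also have "\<dots> = (\<Sum>B\<in>Pow U. ?w B * (if a \<in> C then 1 else 2))
        + (\<Sum>B\<in>Pow U. ?w B * (if a \<in> C then 2 else 1))"
    using insert by (intro arg_cong2[where f = "(+)"] sum.cong)
      (auto simp: agreements_insert_notin agreements_insert_in power_add)
  also have "\<dots> = 3 * (\<Sum>B\<in>Pow U. ?w B)"
    by (simp add: sum_distrib_right[symmetric] sum.distrib[symmetric])
  finally show ?case using insert by simp
qed

lemma card_many_agreements_le:
  assumes "finite U"
  shows "real (card {B\<in>Pow U. T \<le> agreements U C B}) * 2 ^ T \<le> 3 ^ card U"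
proof -
  have "real (card {B\<in>Pow U. T \<le> agreements U C B}) * 2 ^ T
      = (\<Sum>B\<in>{B\<in>Pow U. T \<le> agreements U C B}. (2::real) ^ T)"
    by simp
  also have "\<dots> \<le> (\<Sum>B\<in>{B\<in>Pow U. T \<le> agreements U C B}. (2::real) ^ agreements U C B)"
    by (intro sum_mono) (auto intro: power_increasing)
  also have "\<dots> \<le> (\<Sum>B\<in>Pow U. (2::real) ^ agreements U C B)"
    using assms by (intro sum_mono2) auto
  finally show ?thesis using sum_two_power_agreements[OF assms] by simp
qed

(* Think of sigma B as the memory state after reading a stream that encodes B, and of dec s as
   the set of indices that the state s declares to lie in B. *)
lemma sum_agreements_le:
  fixes \<sigma> :: "'a set \<Rightarrow> 'b" and dec :: "'b \<Rightarrow> 'a set"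
  assumes U: "finite U" and S: "finite S" "\<sigma> ` Pow U \<subseteq> S" "card S \<le> K"
  shows "(\<Sum>B\<in>Pow U. real (agreements U (dec (\<sigma> B)) B))
     \<le> real T * 2 ^ card U + real (card U) * real K * 3 ^ card U / 2 ^ T"
proof -
  let ?good = "\<lambda>s B. T \<le> agreements U (dec s) B"
  have pointwise: "real (agreements U (dec (\<sigma> B)) B) \<le> real T + real (card U) * card {s\<in>S. ?good s B}"
    if "B \<in> Pow U" for B
  proof (cases "?good (\<sigma> B) B")
    case True
    then have "\<sigma> B \<in> {s\<in>S. ?good s B}" using S that by auto
    then have "card {s\<in>S. ?good s B} \<ge> 1"
      using S by (auto simp: Suc_le_eq card_gt_0_iff)
    then have "real (card U) \<le> real (card U) * card {s\<in>S. ?good s B}"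
      by (simp add: mult_le_cancel_left1)
    then show ?thesis using agreements_le_card[OF U, of "dec (\<sigma> B)" B] by linarith
  next
    case False
    then show ?thesis by (intro add_increasing2) auto
  qed
  have "(\<Sum>B\<in>Pow U. real (agreements U (dec (\<sigma> B)) B))
      \<le> (\<Sum>B\<in>Pow U. real T + real (card U) * card {s\<in>S. ?good s B})"
    using pointwise by (intro sum_mono)
  also have "\<dots> = real T * 2 ^ card U + real (card U) * (\<Sum>B\<in>Pow U. real (card {s\<in>S. ?good s B}))"
    using U by (simp add: sum.distrib sum_distrib_left card_Pow)
  also have "(\<Sum>B\<in>Pow U. real (card {s\<in>S. ?good s B})) = (\<Sum>s\<in>S. real (card {B\<in>Pow U. ?good s B}))"
    using sum.swap_restrict[of "Pow U" S "\<lambda>_ _. 1::real" "\<lambda>B s. ?good s B"] U S by simp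
  also have "(\<Sum>s\<in>S. real (card {B\<in>Pow U. ?good s B})) \<le> (\<Sum>s\<in>S. 3 ^ card U / 2 ^ T)"
    using card_many_agreements_le[OF U] by (intro sum_mono) (simp add: field_simps)
  also have "\<dots> \<le> real K * 3 ^ card U / 2 ^ T"
    using S by (simp add: divide_right_mono)
  finally show ?thesis
    by (simp add: mult_left_mono mult.assoc)
qed

section \<open>Hard streams\<close>

lemma freq_append: "freq (xs @ ys) j = freq xs j + freq ys j"
  by (simp add: freq_def)

lemma freq_prefix_bounds:
  assumes "\<forall>u\<in>set D. snd u \<ge> 0"
  shows "0 \<le> freq (take k D) j \<and> freq (take k D) j \<le> freq D j"
proof -
  have "\<forall>u\<in>set (take k D). snd u \<ge> 0" "\<forall>u\<in>set (drop k D). snd u \<ge> 0"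
    using assms by (auto dest: in_set_takeD in_set_dropD)
  then have "freq (take k D) j \<ge> 0" "freq (drop k D) j \<ge> 0"
    unfolding freq_def by (force intro!: sum_list_nonneg)+
  moreover have "freq D j = freq (take k D) j + freq (drop k D) j"
    by (metis append_take_drop_id freq_append)
  ultimately show ?thesis by simp
qed

definition block_stream :: "nat set \<Rightarrow> nat \<Rightarrow> nat \<Rightarrow> stream" where
  "block_stream B N y = map (\<lambda>k. (k, int y)) (filter (\<lambda>k. k \<in> B) [0..<N])"

lemma freq_block_stream: "freq (block_stream B N y) j = (if j < N \<and> j \<in> B then int y else 0)"
  unfolding block_stream_def by (induction N) (auto simp: freq_def)

lemma freq_block_stream_append:
  "freq (block_stream B N y @ [(i, int x)]) j = (if j < N \<and> j \<in> B then int y else 0) + (if i = j then int x else 0)"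
  unfolding freq_append freq_block_stream by (simp add: freq_def)

lemma block_stream_append_in_streams:
  assumes "i < N" "x + y \<le> M"
  shows "block_stream B N y @ [(i, int x)] \<in> streams N M (N + 1)"
proof -
  let ?D = "block_stream B N y @ [(i, int x)]"
  have "length ?D \<le> N + 1"
    by (simp add: block_stream_def) (metis diff_zero length_filter_le length_upt)
  moreover have "\<forall>u\<in>set ?D. fst u < N" using assms(1) by (auto simp: block_stream_def)
  moreover have "\<bar>freq (take k ?D) j\<bar> \<le> int M" for k j
  proof -
    have "0 \<le> freq (take k ?D) j \<and> freq (take k ?D) j \<le> freq ?D j"
      by (intro freq_prefix_bounds) (auto simp: block_stream_def)
    moreover have "freq ?D j \<le> int M" using assms(2) by (auto simp: freq_block_stream_append)
    ultimately show ?thesis by auto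
  qed
  ultimately show ?thesis unfolding streams_def by auto
qed

lemma gsum_block_stream_append:
  "gsum F N (block_stream B N y @ [(i, int x)]) = (\<Sum>j<N. F ((if j \<in> B then y else 0) + (if i = j then x else 0)))"
  unfolding gsum_def freq_block_stream_append by (intro sum.cong refl) (auto simp: nat_add_distrib)

lemma gsum_block_stream_append_ge:
  assumes "\<And>z. F z \<ge> 0" "i < N" "i \<in> B"
  shows "F (x + y) \<le> gsum F N (block_stream B N y @ [(i, int x)])"
proof -
  have "F (x + y) = F ((if i \<in> B then y else 0) + (if i = i then x else 0))"
    using assms by (simp add: add.commute)
  also have "\<dots> \<le> (\<Sum>j<N. F ((if j \<in> B then y else 0) + (if i = j then x else 0)))"
    using assms by (intro member_le_sum) auto
  finally show ?thesis by (simp add: gsum_block_stream_append)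
qed

lemma gsum_block_stream_append_le:
  assumes "\<And>z. F z \<ge> 0" "F 0 = 0" "i < N" "i \<notin> B"
  shows "gsum F N (block_stream B N y @ [(i, int x)]) \<le> F x + real N * F y"
proof -
  have "gsum F N (block_stream B N y @ [(i, int x)]) \<le> (\<Sum>j<N. (if i = j then F x else 0) + F y)"
    unfolding gsum_block_stream_append using assms by (intro sum_mono) auto
  also have "\<dots> = F x + real N * F y" using assms(3) by (simp add: sum.distrib)
  finally show ?thesis .
qed

section \<open>A space lower bound for one-pass algorithms\<close>

lemma sum_prob_le_of_pointwise:
  fixes p :: "'a pmf" and E :: "'i \<Rightarrow> 'a set"
  assumes "finite I" "\<And>r. r \<in> set_pmf p \<Longrightarrow> (\<Sum>j\<in>I. indicator (E j) r) \<le> (c::real)"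
  shows "(\<Sum>j\<in>I. measure_pmf.prob p (E j)) \<le> c"
proof -
  have int: "integrable (measure_pmf p) (indicat_real (E j))" for j
    by (intro integrable_real_indicator) (auto simp: measure_pmf.emeasure_finite less_top[symmetric])
  have "(\<Sum>j\<in>I. measure_pmf.prob p (E j)) = measure_pmf.expectation p (\<lambda>r. \<Sum>j\<in>I. indicator (E j) r)"
    by (simp add: Bochner_Integration.integral_sum int)
  also have "\<dots> \<le> c"
    using assms(2) by (intro measure_pmf.integral_le_const Bochner_Integration.integrable_sum int)
      (simp add: AE_measure_pmf_iff)
  finally show ?thesis .
qed

lemma card_bool_lists_le: "card {xs::bool list. set xs \<subseteq> UNIV \<and> length xs \<le> n} \<le> 2 ^ (n + 1)"
proof -
  have "card {xs::bool list. set xs \<subseteq> UNIV \<and> length xs \<le> n} = (\<Sum>j\<le>n. 2 ^ j)"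
    by (subst card_lists_length_le) (auto simp: card_UNIV_bool)
  also have "\<dots> \<le> 2 ^ (n + 1)"
    by (induction n) auto
  finally show ?thesis .
qed

lemma sum_agreements_bool_lists_le:
  fixes \<sigma> :: "'a set \<Rightarrow> bool list" and dec :: "bool list \<Rightarrow> 'a set"
  assumes "finite U" "\<And>B. B \<subseteq> U \<Longrightarrow> length (\<sigma> B) \<le> L"
  shows "(\<Sum>B\<in>Pow U. real (agreements U (dec (\<sigma> B)) B))
     \<le> real T * 2 ^ card U + real (card U) * 2 ^ (L + 1) * 3 ^ card U / 2 ^ T"
proof -
  have "\<sigma> ` Pow U \<subseteq> {xs. set xs \<subseteq> UNIV \<and> length xs \<le> L}"
    using assms(2) by auto
  from sum_agreements_le[OF assms(1) finite_lists_length_le this card_bool_lists_le]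
  show ?thesis by simp
qed

lemma prob_index_answer_correct:
  fixes F :: "nat \<Rightarrow> real"
  assumes F: "\<And>z. F z \<ge> 0" "F 0 = 0" and eps: "0 \<le> eps" "eps \<le> 1"
    and gap: "(1 + eps) * (F x + real N * F y) < (1 - eps) * F (x + y)"
    and A: "solves A F eps N (streams N M (N + 1))" and "i < N" "x + y \<le> M"
  shows "2/3 \<le> measure_pmf.prob (seed A)
    {r. ((1 + eps) * (F x + real N * F y) < out A r (run A r (block_stream B N y @ [(i, int x)]))) = (i \<in> B)}"
    (is "_ \<le> measure_pmf.prob _ ?E")
proof -
  let ?D = "block_stream B N y @ [(i, int x)]"
  let ?G = "{r. (1 - eps) * gsum F N ?D \<le> out A r (run A r ?D) \<and> out A r (run A r ?D) \<le> (1 + eps) * gsum F N ?D}"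
  have "?G \<subseteq> ?E"
  proof (cases "i \<in> B")
    case True
    have "(1 - eps) * F (x + y) \<le> (1 - eps) * gsum F N ?D"
      using gsum_block_stream_append_ge[of F, OF F(1) \<open>i < N\<close> True] eps by (intro mult_left_mono) auto
    then show ?thesis using True gap by auto
  next
    case False
    have "(1 + eps) * gsum F N ?D \<le> (1 + eps) * (F x + real N * F y)"
      using gsum_block_stream_append_le[of F, OF F \<open>i < N\<close> False] eps by (intro mult_left_mono) auto
    then show ?thesis using False by auto
  qed
  moreover have "2/3 \<le> measure_pmf.prob (seed A) ?G"
    using A block_stream_append_in_streams[OF assms(7,8)] unfolding solves_def by blast
  ultimately show ?thesis
    using measure_pmf.finite_measure_mono[of ?G ?E "seed A"] by simp
qed

lemma space_le_nonneg:
  assumes "space_le A S s" "S \<noteq> {}"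
  shows "0 \<le> s"
proof -
  obtain D r where "D \<in> S" "r \<in> set_pmf (seed A)"
    using assms(2) set_pmf_not_empty by fast
  then have "real (length (run A r (take 0 D))) \<le> s"
    using assms(1) unfolding space_le_def by blast
  then show ?thesis by linarith
qed

lemma sum_index_answers_correct_le:
  assumes "\<And>B. length (run A r (block_stream B N y)) \<le> L"
  shows "(\<Sum>B\<in>Pow {..<N}. \<Sum>i<N.
      indicator {r. (\<tau> < out A r (run A r (block_stream B N y @ [(i, int x)]))) = (i \<in> B)} r)
    \<le> real T * 2 ^ N + real N * 2 ^ (L + 1) * 3 ^ N / 2 ^ T"
proof -
  define dec where "dec st = {i. \<tau> < out A r (step A r st (i, int x))}" for st
  have "(\<Sum>i<N. indicator {r. (\<tau> < out A r (run A r (block_stream B N y @ [(i, int x)]))) = (i \<in> B)} r)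
      = real (agreements {..<N} (dec (run A r (block_stream B N y))) B)" for B
  proof -
    have "(\<Sum>i<N. indicator {r. (\<tau> < out A r (run A r (block_stream B N y @ [(i, int x)]))) = (i \<in> B)} r)
        = (\<Sum>i<N. if (i \<in> dec (run A r (block_stream B N y))) = (i \<in> B) then 1 else (0::real))"
      by (intro sum.cong refl) (simp add: dec_def run_def indicator_def)
    then show ?thesis
      by (simp add: sum.If_cases agreements_def Int_def)
  qed
  then show ?thesis
    using sum_agreements_bool_lists_le[where \<sigma> = "\<lambda>B. run A r (block_stream B N y)" and U = "{..<N}"
        and dec = dec and T = T, OF _ assms] by simp
qed

lemma index_space_bound_numeric:
  fixes s :: real
  assumes "1 \<le> k" "0 \<le> s"
    and "(2/3) * (2 ^ (5 * k) * real (5 * k))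
      \<le> real (3 * k) * 2 ^ (5 * k) + real (5 * k) * 2 ^ (nat \<lfloor>s\<rfloor> + 1) * 3 ^ (5 * k) / 2 ^ (3 * k)"
  shows "real k * ln (256 / 243) \<le> ln 30 + s * ln 2"
proof -
  have "(2/3) * (32 ^ k * (5 * real k)) \<le> 3 * real k * 32 ^ k + 5 * real k * 2 ^ (nat \<lfloor>s\<rfloor> + 1) * 243 ^ k / 8 ^ k"
    using assms(3) by (simp add: power_mult)
  then have "(32 * 8::real) ^ k \<le> 30 * 2 ^ nat \<lfloor>s\<rfloor> * 243 ^ k"
    using assms(1) unfolding power_mult_distrib by (simp add: field_simps)
  also have "\<dots> \<le> 30 * 2 powr s * 243 ^ k"
    using assms(2) by (simp add: powr_realpow[symmetric])
  finally have "ln ((256::real) ^ k) \<le> ln (30 * 2 powr s * 243 ^ k)"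
    by (intro ln_mono) auto
  then show ?thesis
    by (simp add: ln_mult ln_realpow ln_powr ln_div algebra_simps)
qed

lemma one_pass_space_lower_bound:
  fixes F :: "nat \<Rightarrow> real" and A :: alg1
  assumes F: "\<And>z. F z \<ge> 0" "F 0 = 0" and N: "N = 5 * k" "k \<ge> 1"
    and M: "x + y \<le> M" and eps: "0 < eps" "eps \<le> 1"
    and gap: "(1 + eps) * (F x + real N * F y) < (1 - eps) * F (x + y)"
    and A: "solves A F eps N (streams N M (N + 1))" "space_le A (streams N M (N + 1)) s"
  shows "real k * ln (256 / 243) \<le> ln 30 + s * ln 2"
proof -
  define \<tau> where "\<tau> = (1 + eps) * (F x + real N * F y)"
  define E where "E j = {r. (\<tau> < out A r (run A r (block_stream (fst j) N y @ [(snd j, int x)]))) = (snd j \<in> fst j)}"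
    for j :: "nat set \<times> nat"
  have D: "block_stream B N y @ [(i, int x)] \<in> streams N M (N + 1)" if "i < N" for B i
    using that M by (rule block_stream_append_in_streams)
  have "0 < N" using N by simp
  then have s: "0 \<le> s"
    using space_le_nonneg[OF A(2)] D by blast
  have "(\<Sum>j\<in>Pow {..<N} \<times> {..<N}. 2/3) \<le> (\<Sum>j\<in>Pow {..<N} \<times> {..<N}. measure_pmf.prob (seed A) (E j))"
    using prob_index_answer_correct[of F, OF F less_imp_le[OF eps(1)] eps(2) gap A(1) _ M]
    by (intro sum_mono) (auto simp: E_def \<tau>_def)
  also have "\<dots> \<le> real (3 * k) * 2 ^ N + real N * 2 ^ (nat \<lfloor>s\<rfloor> + 1) * 3 ^ N / 2 ^ (3 * k)"
  proof (rule sum_prob_le_of_pointwise)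
    fix r assume r: "r \<in> set_pmf (seed A)"
    have "length (run A r (block_stream B N y)) \<le> nat \<lfloor>s\<rfloor>" for B
    proof -
      have "length (block_stream B N y) \<le> length (block_stream B N y @ [(0, int x)])"
        by simp
      then have "real (length (run A r (take (length (block_stream B N y)) (block_stream B N y @ [(0, int x)])))) \<le> s"
        using A(2) D[OF \<open>0 < N\<close>] r unfolding space_le_def by blast
      then show ?thesis by (simp add: le_nat_floor)
    qed
    from sum_index_answers_correct_le[where \<tau> = \<tau> and x = x and T = "3 * k", OF this]
    show "(\<Sum>j\<in>Pow {..<N} \<times> {..<N}. indicator (E j) r)
        \<le> real (3 * k) * 2 ^ N + real N * 2 ^ (nat \<lfloor>s\<rfloor> + 1) * 3 ^ N / 2 ^ (3 * k)"
      by (simp add: E_def sum.cartesian_product split_beta)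
  qed simp
  finally show ?thesis
    using index_space_bound_numeric[OF N(2) s] by (simp add: N card_cartesian_product card_Pow)
qed

section \<open>Growth estimates\<close>

lemma one_plus_powr_ge:
  fixes t e :: real
  assumes "0 < t" "t \<le> 1" "0 < e"
  shows "1 + e * t / 2 \<le> (1 + t) powr e"
proof -
  have "ln (1 / (1 + t)) \<le> 1 / (1 + t) - 1"
    using assms by (intro ln_le_minus_one) auto
  then have "t / (1 + t) \<le> ln (1 + t)"
    using assms by (simp add: ln_div field_simps)
  moreover have "t / 2 \<le> t / (1 + t)"
    using assms by (intro divide_left_mono) auto
  ultimately have "e * (t / 2) \<le> e * ln (1 + t)"
    using assms by (intro mult_left_mono) linarith+
  also have "1 + e * ln (1 + t) \<le> exp (e * ln (1 + t))"
    by (rule exp_ge_add_one_self)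
  finally show ?thesis
    using assms by (simp add: powr_def)
qed

lemma log_powr_gain:
  fixes x y :: nat and eta c :: real
  assumes "1 \<le> x" "x < y" "0 < eta" "0 \<le> c" "c \<le> eta / 20"
  shows "log 2 (1 + real x) powr eta * (1 + 10 * (c / log 2 (1 + real y)))
    \<le> log 2 (1 + real (x + y)) powr eta"
proof -
  define Lx where "Lx = log 2 (1 + real x)"
  have Lx: "1 \<le> Lx" "Lx \<le> log 2 (1 + real y)"
    using assms by (auto simp: Lx_def)
  have "10 * c / log 2 (1 + real y) \<le> (eta / 2) / log 2 (1 + real y)"
    using assms Lx by (intro divide_right_mono) auto
  also have "\<dots> \<le> (eta / 2) / Lx"
    using assms Lx by (intro divide_left_mono) auto
  finally have "1 + 10 * (c / log 2 (1 + real y)) \<le> 1 + eta * (1 / Lx) / 2"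
    by simp
  also have "\<dots> \<le> (1 + 1 / Lx) powr eta"
    using Lx assms by (intro one_plus_powr_ge) auto
  finally have "Lx powr eta * (1 + 10 * (c / log 2 (1 + real y))) \<le> Lx powr eta * (1 + 1 / Lx) powr eta"
    by (intro mult_left_mono) auto
  also have "\<dots> = (Lx + 1) powr eta"
    using Lx by (simp add: powr_mult[symmetric] distrib_left)
  also have "Lx + 1 = log 2 (2 * (1 + real x))"
    by (simp add: Lx_def log_mult del: distrib_left_numeral)
  also have "log 2 (2 * (1 + real x)) powr eta \<le> log 2 (1 + real (x + y)) powr eta"
    using assms by (intro powr_mono2) auto
  finally show ?thesis by (simp add: Lx_def)
qed

lemma one_plus_cube_less:
  fixes d :: real
  assumes "0 < d" "d \<le> 1 / 20"
  shows "(1 + d) * (1 + d) * (1 + d) < (1 - d) * (1 + 10 * d)"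
proof -
  have "d * d * d \<le> d * d * (1 / 20)" "d * d \<le> d * (1 / 20)"
    using assms by (intro mult_left_mono; simp)+
  moreover have "(1 + d) * (1 + d) * (1 + d) = 1 + 3 * d + 3 * (d * d) + d * d * d"
    and "(1 - d) * (1 + 10 * d) = 1 + 9 * d - 10 * (d * d)"
    by algebra+
  ultimately show ?thesis
    using assms by linarith
qed

lemma L_eta_separation:
  fixes g :: "nat \<Rightarrow> real"
  assumes xy: "1 \<le> x" "x < y" and eta: "0 < eta" and c: "0 \<le> c" "c \<le> eta / 20" "c \<le> 1 / 20"
    and g: "0 < g x" "0 \<le> g (x + y)" and d: "d = c / log 2 (1 + real y)"
    and close: "g x \<le> g (x + y) * (1 + d)"
    and tail: "0 \<le> R" "R \<le> d * L_eta eta g x"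
    and eps: "0 < eps" "eps \<le> d"
  shows "(1 + eps) * (L_eta eta g x + R) < (1 - eps) * L_eta eta g (x + y)"
proof -
  define P where "P = L_eta eta g x"
  have "1 \<le> log 2 (1 + real x) powr eta"
    using xy eta by (simp add: ge_one_powr_ge_zero)
  then have P: "0 < P"
    unfolding P_def L_eta_def using g(1) by (intro mult_pos_pos) auto
  have "c / log 2 (1 + real y) \<le> c / 1"
    using c xy by (intro divide_left_mono) auto
  then have d1: "0 < d" "d \<le> 1 / 20"
    using eps c unfolding d by linarith+
  have "(1 + eps) * (P + R) \<le> (1 + d) * ((1 + d) * P)"
    using tail eps P by (intro mult_mono) (auto simp: P_def algebra_simps)
  also have "\<dots> < P * ((1 - d) * (1 + 10 * d) / (1 + d))"
  proof -
    have "(1 + d) * (1 + d) < (1 - d) * (1 + 10 * d) / (1 + d)"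
      using one_plus_cube_less[OF d1] d1 by (simp add: pos_less_divide_eq)
    from mult_strict_left_mono[OF this P] show ?thesis
      by (metis mult.assoc mult.commute)
  qed
  also have "\<dots> = (1 - d) * ((g x / (1 + d)) * (log 2 (1 + real x) powr eta * (1 + 10 * d)))"
    using d1 by (simp add: P_def L_eta_def field_simps)
  also have "\<dots> \<le> (1 - eps) * (g (x + y) * log 2 (1 + real (x + y)) powr eta)"
  proof (intro mult_mono)
    show "g x / (1 + d) \<le> g (x + y)"
      using close d1 by (simp add: field_simps)
    show "log 2 (1 + real x) powr eta * (1 + 10 * d) \<le> log 2 (1 + real (x + y)) powr eta"
      unfolding d using xy eta c by (intro log_powr_gain) auto
  qed (use eps d1 g in auto)
  finally show ?thesis
    by (simp add: P_def L_eta_def)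
qed

lemma L_eta_tail_le:
  fixes g :: "nat \<Rightarrow> real"
  assumes a: "0 < a" and xy: "1 \<le> x" "1 \<le> y" and eta: "0 \<le> eta"
    and g: "0 \<le> g y" "g y * real y powr a \<le> g x"
    and N: "real N \<le> 5 * real y powr (a / 2)"
    and small: "5 * (real y powr (- a / 2) * log 2 (1 + real y) powr (eta + 1)) \<le> c"
  shows "real N * L_eta eta g y \<le> c / log 2 (1 + real y) * L_eta eta g x"
proof -
  define Ly where "Ly = log 2 (1 + real y)"
  have Ly: "1 \<le> Ly" using xy by (simp add: Ly_def)
  have gx: "0 \<le> g x"
    using order_trans[OF mult_nonneg_nonneg[OF g(1) powr_ge_zero] g(2)] .
  have c: "0 \<le> c"
    using order_trans[OF _ small] by simp
  have gy: "g y \<le> g x * real y powr (- a)"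
    using g xy by (simp add: powr_minus field_simps)
  have "real N * L_eta eta g y \<le> (5 * real y powr (a / 2)) * ((g x * real y powr (- a)) * Ly powr eta)"
    unfolding L_eta_def Ly_def using N gy g by (intro mult_mono) auto
  also have "\<dots> = g x * (5 * (real y powr (- a / 2) * Ly powr (eta + 1))) / Ly"
  proof -
    have "real y powr (a / 2) * real y powr (- a) = real y powr (- a / 2)"
      by (simp add: powr_add[symmetric])
    moreover have "Ly powr (eta + 1) = Ly powr eta * Ly"
      using Ly by (simp add: powr_add)
    ultimately show ?thesis
      using Ly by (simp add: field_simps)
  qed
  also have "\<dots> \<le> g x * c / Ly"
    using small gx Ly unfolding Ly_def by (intro divide_right_mono mult_left_mono) auto
  also have "\<dots> \<le> c / Ly * L_eta eta g x"
  proof -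
    have "1 \<le> log 2 (1 + real x) powr eta"
      using xy eta by (simp add: ge_one_powr_ge_zero)
    moreover have "0 \<le> c / Ly * g x"
      using c Ly gx by simp
    ultimately have "c / Ly * g x * 1 \<le> c / Ly * g x * log 2 (1 + real x) powr eta"
      by (intro mult_left_mono)
    then show ?thesis
      unfolding L_eta_def by (simp add: mult.commute)
  qed
  finally show ?thesis by (simp add: Ly_def)
qed

lemma const_div_log_in_class_S:
  assumes "0 < c"
  shows "(\<lambda>z::nat. c / log 2 (2 + real z)) \<in> class_S"
proof -
  have "antimono (\<lambda>z::nat. c / log 2 (2 + real z))"
    using assms by (intro antimonoI divide_left_mono) auto
  moreover have "filterlim (\<lambda>z::nat. real z powr a * (c / log 2 (2 + real z))) at_top sequentially"
    if "0 < a" for a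
  proof -
    have "filterlim (\<lambda>x::real. x powr a * (c / log 2 (2 + x))) at_top at_top"
      using that assms by real_asymp
    then show ?thesis by (rule filterlim_compose[OF _ filterlim_real_sequentially])
  qed
  moreover have "((\<lambda>z::nat. real z powr (- a) * (c / log 2 (2 + real z))) \<longlongrightarrow> 0) sequentially"
    if "0 < a" for a
  proof -
    have "((\<lambda>x::real. x powr (- a) * (c / log 2 (2 + x))) \<longlongrightarrow> 0) at_top"
      using that assms by real_asymp
    then show ?thesis by (rule filterlim_compose[OF _ filterlim_real_sequentially])
  qed
  ultimately show ?thesis
    using assms unfolding class_S_def by auto
qed

lemma log_div_const_sub_polynomial:
  assumes "0 < c"
  shows "sub_polynomial (\<lambda>t. log 2 (1 + t) / c)"
  unfolding sub_polynomial_def using assms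
  by (intro conjI allI impI) (simp, real_asymp+)

lemma sub_polynomial_eventually_le_powr:
  assumes "sub_polynomial h" "0 < \<delta>" "filterlim t at_top F"
  shows "\<forall>\<^sub>F z in F. h (t z) \<le> t z powr \<delta>"
proof -
  have "((\<lambda>x. x powr (- \<delta>) * h x) \<longlongrightarrow> 0) at_top"
    using assms unfolding sub_polynomial_def by auto
  then have "\<forall>\<^sub>F x in at_top. x powr (- \<delta>) * h x < 1"
    by (rule order_tendstoD) simp
  then have "\<forall>\<^sub>F x in at_top. h x \<le> x powr \<delta>"
    using eventually_gt_at_top[of 0]
    by eventually_elim (simp add: powr_minus field_simps)
  then show ?thesis
    using assms(3) by (rule eventually_compose_filterlim)
qed

lemma eventually_powr_log_powr_le:
  assumes "0 < b" "0 < c"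
  shows "\<forall>\<^sub>F y in sequentially. C * (real y powr (- b) * log 2 (1 + real y) powr e) \<le> c"
proof -
  have "((\<lambda>x::real. C * (x powr (- b) * log 2 (1 + x) powr e)) \<longlongrightarrow> 0) at_top"
    using assms by real_asymp
  then have "((\<lambda>y::nat. C * (real y powr (- b) * log 2 (1 + real y) powr e)) \<longlongrightarrow> 0) sequentially"
    by (rule filterlim_compose[OF _ filterlim_real_sequentially])
  from order_tendstoD(2)[OF this assms(2)] show ?thesis
    by (rule eventually_mono) simp
qed

lemma eventually_sub_polynomial_space_small:
  assumes hs: "sub_polynomial hs" and a: "0 < a"
  defines "k \<equiv> \<lambda>y::nat. nat \<lfloor>real y powr (a / 2)\<rfloor>"
  shows "\<forall>\<^sub>F y in sequentially. ln 30 + hs (real (5 * k y) * real (2 * y)) * ln 2 < real (k y) * ln (256 / 243)"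
proof -
  define t where "t y = real (5 * k y) * real (2 * y)" for y
  define \<delta> where "\<delta> = a / (4 + 2 * a)"
  have k: "real y powr (a / 2) - 1 \<le> real (k y)" "real (k y) \<le> real y powr (a / 2)" for y
    unfolding k_def by (linarith, simp add: of_nat_floor)
  have k1: "1 \<le> k y" if "1 \<le> y" for y
    using that a unfolding k_def by (simp add: le_nat_floor ge_one_powr_ge_zero)
  have t: "real y \<le> t y" if "1 \<le> y" for y
    using mult_right_mono[of 1 "real (k y)" "real y"] k1[OF that] by (simp add: t_def)
  have "filterlim t at_top sequentially"
    by (rule filterlim_at_top_mono[OF filterlim_real_sequentially])
      (use t in \<open>auto simp: eventually_sequentially\<close>)
  moreover have "0 < \<delta>" using a by (simp add: \<delta>_def)
  ultimately have "\<forall>\<^sub>F y in sequentially. hs (t y) \<le> t y powr \<delta>"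
    by (intro sub_polynomial_eventually_le_powr[OF hs])
  moreover have "\<forall>\<^sub>F y in sequentially.
      ln 30 + ln 2 * (10 powr \<delta> * real y powr (a / 4)) < (real y powr (a / 2) - 1) * ln (256 / 243)"
  proof -
    define f where "f x = (x powr (a / 2) - 1) * ln (256 / 243) - ln 2 * (10 powr \<delta> * x powr (a / 4))"
      for x :: real
    have "0 < ln (256 / 243 :: real)" by simp
    then have "filterlim f at_top at_top"
      unfolding f_def using a by real_asymp
    then have "filterlim (\<lambda>y. f (real y)) at_top sequentially"
      by (rule filterlim_compose[OF _ filterlim_real_sequentially])
    then have "\<forall>\<^sub>F y in sequentially. ln 30 < f (real y)"
      by (simp add: filterlim_at_top_dense)
    then show ?thesis
      by (rule eventually_mono) (simp add: f_def)
  qed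
  moreover have "\<forall>\<^sub>F y in sequentially. 1 \<le> y"
    by (rule eventually_ge_at_top)
  ultimately show ?thesis
  proof eventually_elim
    case (elim y)
    have "t y \<le> 10 * real y powr (1 + a / 2)"
      using k(2)[of y] elim by (simp add: t_def powr_add mult_right_mono)
    then have "t y powr \<delta> \<le> (10 * real y powr (1 + a / 2)) powr \<delta>"
      using t[of y] elim \<open>0 < \<delta>\<close> by (intro powr_mono2) auto
    also have "\<dots> = 10 powr \<delta> * real y powr ((1 + a / 2) * \<delta>)"
      by (simp add: powr_mult powr_powr)
    also have "(1 + a / 2) * \<delta> = a / 4"
      using a by (simp add: \<delta>_def field_simps)
    finally have "ln 2 * hs (t y) \<le> ln 2 * (10 powr \<delta> * real y powr (a / 4))"
      using elim by (intro mult_left_mono) auto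
    moreover have "(real y powr (a / 2) - 1) * ln (256 / 243) \<le> real (k y) * ln (256 / 243)"
      using k(1)[of y] by (intro mult_right_mono) auto
    ultimately have "ln 30 + ln 2 * hs (t y) < real (k y) * ln (256 / 243)"
      using elim(2) by linarith
    then show ?case
      by (simp add: t_def mult.commute)
  qed
qed

section \<open>Nearly periodic functions\<close>

lemma nearly_periodic_frequently_close:
  fixes g h :: "nat \<Rightarrow> real"
  assumes G: "g \<in> class_G" and np: "nearly_periodic class_S g" and h: "h \<in> class_S"
  obtains a where "0 < a"
    "\<exists>\<^sub>F y in sequentially. \<exists>x<y.
      0 < g x \<and> g y * real y powr a \<le> g x \<and> g x \<le> g (x + y) * (1 + h y)"
proof -
  obtain a where a: "0 < a"
    and periods: "\<forall>N>0. \<exists>x y::nat. x < y \<and> real y \<ge> N \<and> g y \<le> g x / real y powr a"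
    using np unfolding nearly_periodic_def by blast
  have "\<exists>N1>0. \<forall>y x. is_period g a y \<and> real y \<ge> N1 \<and> x < y \<and>
      g y * real y powr a \<le> g x \<longrightarrow> \<bar>g (x + y) - g x\<bar> \<le> min (g x) (g (x + y)) * h y"
    using np a h unfolding nearly_periodic_def by blast
  then obtain N1 where close: "\<And>y x. is_period g a y \<Longrightarrow> real y \<ge> N1 \<Longrightarrow> x < y \<Longrightarrow>
      g y * real y powr a \<le> g x \<Longrightarrow> \<bar>g (x + y) - g x\<bar> \<le> min (g x) (g (x + y)) * h y"
    by blast
  have "\<exists>y\<ge>Y. \<exists>x<y. 0 < g x \<and> g y * real y powr a \<le> g x \<and> g x \<le> g (x + y) * (1 + h y)"
    for Y
  proof -
    obtain x y where xy: "x < y" "real y \<ge> max (real Y) (max N1 1)"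
      and gy: "g y \<le> g x / real y powr a"
    proof -
      have "max (real Y) (max N1 1) > 0" by simp
      then show ?thesis using periods that by blast
    qed
    then have y: "Y \<le> y" "N1 \<le> real y" "0 < y" by auto
    have gya: "g y * real y powr a \<le> g x"
      using gy y by (simp add: pos_le_divide_eq)
    moreover have "0 < g y"
      using G y by (simp add: class_G_def)
    then have "0 < g y * real y powr a"
      using y by simp
    then have "0 < g x"
      using gya by linarith
    moreover have "g x \<le> g (x + y) * (1 + h y)"
    proof -
      have "is_period g a y"
        unfolding is_period_def using xy gy by blast
      from abs_le_D2[OF close[OF this y(2) xy(1) gya]]
      have "g x - g (x + y) \<le> min (g x) (g (x + y)) * h y"
        by simp
      moreover have "min (g x) (g (x + y)) * h y \<le> g (x + y) * h y"
        using h by (intro mult_right_mono) (auto simp: class_S_def)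
      ultimately show ?thesis by (simp add: distrib_left)
    qed
    ultimately show ?thesis using xy y by blast
  qed
  then have "\<exists>\<^sub>F y in sequentially. \<exists>x<y.
      0 < g x \<and> g y * real y powr a \<le> g x \<and> g x \<le> g (x + y) * (1 + h y)"
    unfolding frequently_sequentially by blast
  with a that show ?thesis by blast
qed

lemma L_eta_gap_at_period:
  fixes g :: "nat \<Rightarrow> real"
  assumes eta: "0 < eta" and c: "0 < c" "c \<le> eta / 20" "c \<le> 1 / 20" and a: "0 < a"
    and g: "\<And>z. 0 \<le> g z" "g 0 = 0" and x: "x < y" "0 < g x" "g y * real y powr a \<le> g x"
    and close: "g x \<le> g (x + y) * (1 + c / log 2 (2 + real y))"
    and y: "1 \<le> y" "5 * (real y powr (- a / 2) * log 2 (1 + real y) powr (eta + 1)) \<le> c"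
    and N: "real N \<le> 5 * real y powr (a / 2)"
    and eps: "0 < eps" "eps \<le> c / log 2 (1 + real y)"
  shows "(1 + eps) * (L_eta eta g x + real N * L_eta eta g y) < (1 - eps) * L_eta eta g (x + y)"
proof -
  define d where "d = c / log 2 (1 + real y)"
  have "1 \<le> x"
    using x(2) g(2) by (cases x) auto
  have "c / log 2 (2 + real y) \<le> d"
    unfolding d_def using c(1) y(1) by (intro divide_left_mono) auto
  then have "g x \<le> g (x + y) * (1 + d)"
    using close mult_left_mono[OF _ g(1), of "1 + c / log 2 (2 + real y)" "1 + d" "x + y"] by linarith
  moreover have "0 \<le> real N * L_eta eta g y"
    using g(1) by (simp add: L_eta_def)
  moreover have "real N * L_eta eta g y \<le> d * L_eta eta g x"
    unfolding d_def using L_eta_tail_le[OF a \<open>1 \<le> x\<close> y(1) _ g(1) x(3) N y(2)] eta by simp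
  ultimately show ?thesis
    using L_eta_separation[where g = g, OF \<open>1 \<le> x\<close> x(1) eta less_imp_le[OF c(1)] c(2,3) x(2) g(1) d_def] eps
    by (simp add: d_def)
qed

lemma L_eta_not_one_pass_tractable:
  fixes g :: "nat \<Rightarrow> real"
  assumes G: "g \<in> class_G" and np: "nearly_periodic class_S g" and eta: "0 < eta"
  shows "\<not> one_pass_tractable (L_eta eta g)"
proof
  assume "one_pass_tractable (L_eta eta g)"
  define c where "c = min eta 1 / 20"
  have c: "0 < c" "c \<le> eta / 20" "c \<le> 1 / 20"
    using eta by (auto simp: c_def)
  have g: "\<And>z. 0 \<le> g z" "g 0 = 0"
    using G unfolding class_G_def by (auto simp: le_less) (metis neq0_conv)
  obtain a where a: "0 < a" and pairs: "\<exists>\<^sub>F y in sequentially. \<exists>x<y. 0 < g x \<and>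
      g y * real y powr a \<le> g x \<and> g x \<le> g (x + y) * (1 + c / log 2 (2 + real y))"
    using nearly_periodic_frequently_close[OF G np const_div_log_in_class_S[OF c(1)]] by blast
  obtain hs where hs: "sub_polynomial hs"
    and algs: "\<And>n M m eps. 1 \<le> n \<Longrightarrow> 1 \<le> M \<Longrightarrow> 0 < eps \<Longrightarrow> c / log 2 (1 + real n * real M) \<le> eps \<Longrightarrow>
      \<exists>A. solves A (L_eta eta g) eps n (streams n M m) \<and> space_le A (streams n M m) (hs (real n * real M))"
    using \<open>one_pass_tractable (L_eta eta g)\<close> log_div_const_sub_polynomial[OF c(1)]
    unfolding one_pass_tractable_def by auto
  define k where "k y = nat \<lfloor>real y powr (a / 2)\<rfloor>" for y :: nat
  have "\<forall>\<^sub>F y in sequentially. 1 \<le> y \<and>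
      5 * (real y powr (- a / 2) * log 2 (1 + real y) powr (eta + 1)) \<le> c \<and>
      ln 30 + hs (real (5 * k y) * real (2 * y)) * ln 2 < real (k y) * ln (256 / 243)"
    using eventually_ge_at_top eventually_powr_log_powr_le[of "a / 2" c 5 "eta + 1"]
      eventually_sub_polynomial_space_small[OF hs a] a c
    by (auto simp: k_def intro: eventually_conj)
  from frequently_ex[OF frequently_eventually_conj[OF pairs this]]
  obtain y x where y: "1 \<le> y" "5 * (real y powr (- a / 2) * log 2 (1 + real y) powr (eta + 1)) \<le> c"
      and space: "ln 30 + hs (real (5 * k y) * real (2 * y)) * ln 2 < real (k y) * ln (256 / 243)"
      and x: "x < y" "0 < g x" "g y * real y powr a \<le> g x"
        "g x \<le> g (x + y) * (1 + c / log 2 (2 + real y))"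
    by blast
  define N where "N = 5 * k y"
  define eps where "eps = c / log 2 (1 + real N * real (2 * y))"
  have k: "1 \<le> k y" "real (k y) \<le> real y powr (a / 2)"
    using y a by (auto simp: k_def le_nat_floor ge_one_powr_ge_zero of_nat_floor)
  have "1 * real y \<le> real N * real y"
    using k by (intro mult_right_mono) (auto simp: N_def)
  then have "log 2 (1 + real y) \<le> log 2 (1 + real N * real (2 * y))"
    by (intro log_mono) auto
  moreover have "1 \<le> log 2 (1 + real y)"
    using y by simp
  ultimately have eps: "0 < eps" "eps \<le> c / log 2 (1 + real y)" "eps \<le> 1"
    unfolding eps_def using c
    by (auto intro!: divide_left_mono order_trans[OF divide_left_mono[of 1]]
        simp del: log_le_cancel_iff zero_less_log_cancel_iff one_le_log_cancel_iff)
  obtain A where A: "solves A (L_eta eta g) eps N (streams N (2 * y) (N + 1))"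
      "space_le A (streams N (2 * y) (N + 1)) (hs (real N * real (2 * y)))"
    using algs[of N "2 * y" eps "N + 1"] eps k y by (auto simp: N_def eps_def)
  have "real N \<le> 5 * real y powr (a / 2)"
    using k by (simp add: N_def)
  from L_eta_gap_at_period[OF eta c a g x y this eps(1,2)]
  have "real (k y) * ln (256 / 243) \<le> ln 30 + hs (real N * real (2 * y)) * ln 2"
    using x(1) g
    by (intro one_pass_space_lower_bound[OF _ _ N_def k(1) _ eps(1,3) _ A]) (auto simp: L_eta_def)
  with space show False
    by (simp add: N_def)
qed

theorem theorem30:
  fixes g :: "nat \<Rightarrow> real"
  assumes "g \<in> class_G" and "nearly_periodic class_S g"
  shows "\<not> one_pass_tractable g \<or> (\<forall>eta>0. \<not> one_pass_tractable (L_eta eta g))"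
  using L_eta_not_one_pass_tractable[OF assms] by blast

end
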